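(* Let $(M,A)$ be a $d$-dimensional BUT-manifold. Let $\{B_i,B_{-i}\}$, $i=1,\ldots,d+1$, be a family of closed subsets of $M$ with $B_{-i}=A(B_i)$ and $B_i\cap B_{-i}=\emptyset$ for all $i$. If this family covers $M$, then for every set of indices $\{k_1,\ldots,k_{d+1}\}\subset\{\pm1,\pm2,\ldots,\pm(d+1)\}$ with $|k_i|=i$ for all $i$, the intersection $\bigcap_{i=1}^{d+1}B_{k_i}$ is nonempty.
   Context: A BUT (Borsuk–Ulam type) manifold is a pair $(M,A)$ where $M$ is a connected compact piecewise-linear $d$-dimensional manifold without boundary and $A:M\to M$ is a free simplicial involution ($A(A(x))=x$, $A(x)\neq x$), such that for every continuous $g:M\to\mathbb{R}^d$ there is $x\in M$ with $g(A(x))=g(x)$. *)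

theory Defs
  imports "HOL-Analysis.Analysis"
begin

text \<open>A compact polyhedron is represented as a subset M of a Euclidean space 'a
  (every compact polyhedron embeds in some R^N), triangulated by a finite
  triangulation in the sense of HOL-Analysis.\<close>

definition locally_euclidean :: "nat \<Rightarrow> 'a::euclidean_space set \<Rightarrow> bool" where
  "locally_euclidean d M \<longleftrightarrow>
     (\<forall>x\<in>M. \<exists>U. openin (top_of_set M) U \<and> x \<in> U \<and>
        subtopology (top_of_set M) U homeomorphic_space Euclidean_space d)"

definition simplicial_self_map :: "'a::euclidean_space set set \<Rightarrow> ('a \<Rightarrow> 'a) \<Rightarrow> bool" where
  "simplicial_self_map \<T> A \<longleftrightarrow>
     (\<forall>T\<in>\<T>. A ` T \<in> \<T> \<and>
        (\<forall>x\<in>T. \<forall>y\<in>T. \<forall>u::real. 0 \<le> u \<and> u \<le> 1 \<longrightarrow>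
            A ((1 - u) *\<^sub>R x + u *\<^sub>R y) = (1 - u) *\<^sub>R A x + u *\<^sub>R A y))"

definition free_involution :: "'a set \<Rightarrow> ('a \<Rightarrow> 'a) \<Rightarrow> bool" where
  "free_involution M A \<longleftrightarrow> (\<forall>x\<in>M. A x \<in> M \<and> A (A x) = x \<and> A x \<noteq> x)"

definition BU_property :: "nat \<Rightarrow> 'a::topological_space set \<Rightarrow> ('a \<Rightarrow> 'a) \<Rightarrow> bool" where
  "BU_property d M A \<longleftrightarrow>
     (\<forall>g :: nat \<Rightarrow> 'a \<Rightarrow> real. (\<forall>i<d. continuous_on M (g i)) \<longrightarrow>
        (\<exists>x\<in>M. \<forall>i<d. g i (A x) = g i x))"

definition BUT_manifold :: "nat \<Rightarrow> 'a::euclidean_space set \<Rightarrow> ('a \<Rightarrow> 'a) \<Rightarrow> bool" where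
  "BUT_manifold d M A \<longleftrightarrow>
     connected M \<and> compact M \<and> locally_euclidean d M \<and>
     (\<exists>\<T>. triangulation \<T> \<and> \<Union>\<T> = M \<and> simplicial_self_map \<T> A) \<and>
     free_involution M A \<and> BU_property d M A"

end

theory Submission
  imports Defs
begin

text \<open>Suppose the sets \<open>C\<^sub>i = B (k i)\<close> had no common point. By compactness there is
  \<open>\<epsilon> > 0\<close> such that every point of \<open>M\<close> is at distance at least \<open>\<epsilon>\<close> from some \<open>C\<^sub>i\<close>,
  so the bump functions \<open>p\<^sub>i = max 0 (\<epsilon> - dist (-, C\<^sub>i))\<close> are never all positive at one
  point. The Borsuk--Ulam property, applied to the \<open>d\<close> differences \<open>p\<^sub>i - p\<^sub>d\<^sub>+\<^sub>1\<close>,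
  yields a point \<open>x\<close> with \<open>p\<^sub>i x - p\<^sub>i (A x) = c\<close> independent of \<open>i\<close>. If \<open>c \<noteq> 0\<close>, all \<open>p\<^sub>i\<close>
  are positive at \<open>x\<close> or all at \<open>A x\<close>, which is impossible; if \<open>c = 0\<close>, then
  \<open>x \<in> C\<^sub>i \<longleftrightarrow> A x \<in> C\<^sub>i\<close> for every \<open>i\<close>, which fails for an \<open>i\<close> with \<open>x \<in> C\<^sub>i \<union> A(C\<^sub>i)\<close>
  because \<open>A(C\<^sub>i)\<close> is disjoint from \<open>C\<^sub>i\<close>. The sets \<open>B (-i) = A(B i)\<close> are closed because a
  simplicial map of a finite triangulation is affine on each simplex, hence continuous.\<close>

definition affine_on_segments :: "'a::real_vector set \<Rightarrow> ('a \<Rightarrow> 'b::real_vector) \<Rightarrow> bool" where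
  "affine_on_segments S f \<longleftrightarrow>
     (\<forall>x\<in>S. \<forall>y\<in>S. \<forall>u::real. 0 \<le> u \<and> u \<le> 1 \<longrightarrow>
        f ((1 - u) *\<^sub>R x + u *\<^sub>R y) = (1 - u) *\<^sub>R f x + u *\<^sub>R f y)"

lemma simplicial_self_map_affine_on_segments:
  "simplicial_self_map \<T> A \<Longrightarrow> T \<in> \<T> \<Longrightarrow> affine_on_segments T A"
  by (simp add: simplicial_self_map_def affine_on_segments_def)

lemma affine_on_segments_convex_sum:
  assumes f: "affine_on_segments S f" and "convex S"
    and "finite C" "C \<subseteq> S" "\<forall>v\<in>C. 0 \<le> u v" "sum u C = 1"
  shows "f (\<Sum>v\<in>C. u v *\<^sub>R v) = (\<Sum>v\<in>C. u v *\<^sub>R f v)"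
  using \<open>finite C\<close> \<open>C \<subseteq> S\<close> \<open>\<forall>v\<in>C. 0 \<le> u v\<close> \<open>sum u C = 1\<close>
proof (induction C arbitrary: u rule: finite_induct)
  case empty
  then show ?case by simp
next
  case (insert a F)
  define t where "t = 1 - u a"
  have sum_F: "sum u F = t"
    using insert by (simp add: t_def)
  show ?case
  proof (cases "t = 0")
    case True
    then have "\<forall>v\<in>F. u v = 0"
      using sum_F insert by (simp add: sum_nonneg_eq_0_iff)
    then show ?thesis
      using insert.hyps True by (simp add: t_def)
  next
    case False
    then have t: "t > 0"
      using sum_F sum_nonneg[of F u] insert.prems(2) by force
    define w where "w v = u v / t" for v
    have w: "\<forall>v\<in>F. 0 \<le> w v" "sum w F = 1"
      using insert.prems t sum_F by (auto simp: w_def sum_divide_distrib[symmetric])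
    define y where "y = (\<Sum>v\<in>F. w v *\<^sub>R v)"
    have "y \<in> S"
      unfolding y_def using \<open>convex S\<close> insert w by (intro convex_sum) auto
    moreover have "a \<in> S" "0 \<le> t" "t \<le> 1"
      using insert.prems t by (auto simp: t_def)
    ultimately have "f ((1 - t) *\<^sub>R a + t *\<^sub>R y) = (1 - t) *\<^sub>R f a + t *\<^sub>R f y"
      using f unfolding affine_on_segments_def by blast
    moreover have "f y = (\<Sum>v\<in>F. w v *\<^sub>R f v)"
      unfolding y_def using insert w by blast
    ultimately show ?thesis
      using insert.hyps t
      by (simp add: t_def y_def w_def scaleR_sum_right)
  qed
qed

lemma affine_independent_extend:
  fixes f :: "'a::euclidean_space \<Rightarrow> 'b::real_vector"
  assumes "\<not> affine_dependent C" "a \<in> C"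
  obtains g where "linear g" "\<forall>v\<in>C. g (v - a) = f v - f a"
proof -
  have "independent ((\<lambda>x. -a + x) ` (C - {a}))"
    using assms affine_dependent_iff_dependent2 by blast
  then obtain g where "linear g" and g: "\<forall>z\<in>(\<lambda>x. -a + x) ` (C - {a}). g z = f (a + z) - f a"
    using linear_independent_extend[of _ "\<lambda>z. f (a + z) - f a"] by blast
  have "g (v - a) = f v - f a" if "v \<in> C" for v
  proof (cases "v = a")
    case True
    then show ?thesis
      using linear_0[OF \<open>linear g\<close>] by simp
  next
    case False
    then have "g (-a + v) = f (a + (-a + v)) - f a"
      using g that by blast
    then show ?thesis
      by simp
  qed
  with \<open>linear g\<close> show ?thesis
    using that by blast
qed

lemma simplex_affine_on_segments_eq_affine:
  fixes f :: "'a::euclidean_space \<Rightarrow> 'b::real_vector"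
  assumes "n simplex T" and f: "affine_on_segments T f"
  obtains g c where "linear g" "\<And>x. x \<in> T \<Longrightarrow> f x = g x + c"
proof -
  obtain C where C: "finite C" "\<not> affine_dependent C" "T = convex hull C"
    using \<open>n simplex T\<close> unfolding simplex by blast
  show ?thesis
  proof (cases "C = {}")
    case True
    then show ?thesis
      using C that[of "\<lambda>_. 0" 0] by (simp add: linear_zero)
  next
    case False
    then obtain a where "a \<in> C"
      by auto
    then obtain g where "linear g" and g_vertex: "\<forall>v\<in>C. g (v - a) = f v - f a"
      using affine_independent_extend C(2) by metis
    have "f x = g x + (f a - g a)" if "x \<in> T" for x
    proof -
      obtain u where u: "\<forall>v\<in>C. 0 \<le> u v" "sum u C = 1" "x = (\<Sum>v\<in>C. u v *\<^sub>R v)"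
        using \<open>x \<in> T\<close> C by (auto simp: convex_hull_finite)
      have "f x = (\<Sum>v\<in>C. u v *\<^sub>R f v)"
        using affine_on_segments_convex_sum[OF f _ C(1) _ u(1,2)] C(3) u(3)
        by (simp add: convex_convex_hull hull_subset)
      also have "\<dots> = (\<Sum>v\<in>C. u v *\<^sub>R (g (v - a) + f a))"
        using g_vertex by (intro sum.cong) auto
      also have "\<dots> = g (\<Sum>v\<in>C. u v *\<^sub>R (v - a)) + f a"
        using u(2) \<open>linear g\<close>
        by (simp add: scaleR_add_right sum.distrib linear_sum linear_scale scaleR_sum_left[symmetric])
      also have "(\<Sum>v\<in>C. u v *\<^sub>R (v - a)) = x - a"
        using u(2,3) by (simp add: scaleR_diff_right sum_subtractf scaleR_sum_left[symmetric])
      finally show ?thesis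
        using \<open>linear g\<close> by (simp add: linear_diff)
    qed
    with \<open>linear g\<close> show ?thesis
      using that by blast
  qed
qed

lemma continuous_on_simplex_affine_on_segments:
  fixes f :: "'a::euclidean_space \<Rightarrow> 'b::real_normed_vector"
  assumes "n simplex T" "affine_on_segments T f"
  shows "continuous_on T f"
proof -
  obtain g c where "linear g" and f: "\<And>x. x \<in> T \<Longrightarrow> f x = g x + c"
    using simplex_affine_on_segments_eq_affine[OF assms] by blast
  have "continuous_on T (\<lambda>x. g x + c)"
    using \<open>linear g\<close> by (intro continuous_intros linear_continuous_on linear_conv_bounded_linear[THEN iffD1])
  then show ?thesis
    using f continuous_on_eq by force
qed

lemma continuous_on_simplicial_self_map:
  assumes "triangulation \<T>" "simplicial_self_map \<T> A"
  shows "continuous_on (\<Union>\<T>) A"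
proof -
  have "continuous_on (\<Union>T\<in>\<T>. T) A"
  proof (rule continuous_on_closed_Union)
    show "finite \<T>"
      using assms(1) unfolding triangulation_def by blast
  next
    fix T assume "T \<in> \<T>"
    then obtain n where "n simplex T"
      using assms(1) unfolding triangulation_def by blast
    then show "closed T"
      by (metis simplex compact_convex_hull finite_imp_compact compact_imp_closed)
    show "continuous_on T A"
      using \<open>n simplex T\<close> \<open>T \<in> \<T>\<close> assms(2)
      by (intro continuous_on_simplex_affine_on_segments simplicial_self_map_affine_on_segments)
  qed
  then show ?thesis
    by simp
qed

lemma infdist_ge_if_ball_disjoint:
  fixes C :: "'a::metric_space set"
  assumes "C \<noteq> {}" "ball x e \<inter> C = {}"
  shows "e \<le> infdist x C"
  unfolding infdist_notempty[OF assms(1)]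
proof (rule cINF_greatest)
  show "\<And>y. y \<in> C \<Longrightarrow> e \<le> dist x y"
    using assms(2) by (force simp: mem_ball)
qed (use assms(1) in simp)

lemma compact_uniformly_avoids_closed_family:
  fixes M :: "'a::metric_space set"
  assumes "compact M" "\<forall>i\<in>I. closed (C i)" "\<forall>x\<in>M. \<exists>i\<in>I. x \<notin> C i"
  obtains \<epsilon> where "\<epsilon> > 0" "\<forall>x\<in>M. \<exists>i\<in>I. ball x \<epsilon> \<inter> C i = {}"
proof -
  have "M \<subseteq> \<Union>((\<lambda>i. - C i) ` I)" "\<And>G. G \<in> (\<lambda>i. - C i) ` I \<Longrightarrow> open G"
    using assms(2,3) by auto
  then obtain \<epsilon> where "\<epsilon> > 0" "\<And>x. x \<in> M \<Longrightarrow> \<exists>G \<in> (\<lambda>i. - C i) ` I. ball x \<epsilon> \<subseteq> G"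
    using Heine_Borel_lemma[OF \<open>compact M\<close>] by metis
  then show ?thesis
    using that by blast
qed

lemma BU_property_common_difference:
  fixes p :: "nat \<Rightarrow> 'a::topological_space \<Rightarrow> real"
  assumes "BU_property d M A" "\<forall>i\<le>d. continuous_on M (p i)"
  obtains x c where "x \<in> M" "\<forall>i\<le>d. p i x - p i (A x) = c"
proof -
  have "\<forall>j<d. continuous_on M (\<lambda>z. p j z - p d z)"
    using assms(2) by (auto intro: continuous_on_diff)
  then obtain x where "x \<in> M" and x: "\<forall>j<d. p j (A x) - p d (A x) = p j x - p d x"
    using assms(1)[unfolded BU_property_def, rule_format, of "\<lambda>j z. p j z - p d z"] by blast
  have "p i x - p i (A x) = p d x - p d (A x)" if "i \<le> d" for i
  proof (cases "i = d")
    case False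
    then show ?thesis
      using x[rule_format, of i] that by linarith
  qed simp
  with \<open>x \<in> M\<close> show ?thesis
    using that by blast
qed

lemma BU_property_closed_cover_common_point:
  fixes M :: "'a::metric_space set" and C :: "nat \<Rightarrow> 'a set"
  assumes "compact M" and BU: "BU_property d M A" and AM: "\<forall>x\<in>M. A x \<in> M"
    and closed: "\<forall>i\<le>d. closed (C i)"
    and antipodal_free: "\<forall>i\<le>d. \<forall>x\<in>M. x \<in> C i \<longrightarrow> A x \<notin> C i"
    and cover: "\<forall>x\<in>M. \<exists>i\<le>d. x \<in> C i \<or> A x \<in> C i"
  shows "\<exists>x\<in>M. \<forall>i\<le>d. x \<in> C i"
proof (rule ccontr)
  assume "\<not> ?thesis"
  then have "\<forall>i\<in>{..d}. closed (C i)" "\<forall>x\<in>M. \<exists>i\<in>{..d}. x \<notin> C i"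
    using closed by auto
  then obtain \<epsilon> where "\<epsilon> > 0" and gap: "\<forall>x\<in>M. \<exists>i\<in>{..d}. ball x \<epsilon> \<inter> C i = {}"
    using compact_uniformly_avoids_closed_family[OF \<open>compact M\<close>] by blast
  define p where "p i z = max 0 (\<epsilon> - infdist z (C i))" for i z
  have p_nonneg: "0 \<le> p i z" for i z
    by (simp add: p_def)
  have p_empty: "p i z = \<epsilon>" if "C i = {}" for i z
    using that \<open>\<epsilon> > 0\<close> by (simp add: p_def infdist_def)
  have p_eq_iff: "p i z = \<epsilon> \<longleftrightarrow> z \<in> C i" if "i \<le> d" "C i \<noteq> {}" for i z
    using in_closed_iff_infdist_zero[of "C i" z] closed that \<open>\<epsilon> > 0\<close> infdist_nonneg[of z "C i"]
    by (auto simp: p_def max_def)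
  have not_all_pos: False if "z \<in> M" "\<forall>i\<le>d. C i \<noteq> {} \<and> 0 < p i z" for z
  proof -
    obtain i where "i \<le> d" "ball z \<epsilon> \<inter> C i = {}"
      using gap \<open>z \<in> M\<close> by auto
    then have "\<epsilon> \<le> infdist z (C i)"
      using that infdist_ge_if_ball_disjoint by blast
    moreover have "0 < p i z"
      using that(2) \<open>i \<le> d\<close> by blast
    ultimately show False
      by (simp add: p_def)
  qed
  have "\<forall>i\<le>d. continuous_on M (p i)"
    unfolding p_def by (auto intro!: continuous_intros)
  then obtain x c where "x \<in> M" and c: "\<forall>i\<le>d. p i x - p i (A x) = c"
    using BU_property_common_difference[OF BU] by blast
  \<comment> \<open>An empty \<open>C i\<close> makes \<open>p i\<close> constant, since \<open>infdist z {} = 0\<close>.\<close>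
  have nonempty: "C i \<noteq> {}" if "i \<le> d" "c \<noteq> 0" for i
    using c that p_empty by force
  consider "c > 0" | "c < 0" | "c = 0"
    by linarith
  then show False
  proof cases
    case 1
    then have "0 < p i x" if "i \<le> d" for i
      using c that p_nonneg[of i "A x"] by force
    then show False
      using not_all_pos[OF \<open>x \<in> M\<close>] nonempty 1 by auto
  next
    case 2
    then have "0 < p i (A x)" if "i \<le> d" for i
      using c that p_nonneg[of i x] by force
    then show False
      using not_all_pos[of "A x"] AM \<open>x \<in> M\<close> nonempty 2 by auto
  next
    case 3
    obtain j where "j \<le> d" and j: "x \<in> C j \<or> A x \<in> C j"
      using cover \<open>x \<in> M\<close> by blast
    then have "x \<in> C j \<longleftrightarrow> A x \<in> C j"
      using p_eq_iff[of j] c 3 by (metis empty_iff eq_iff_diff_eq_0)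
    then show False
      using j antipodal_free \<open>j \<le> d\<close> \<open>x \<in> M\<close> by blast
  qed
qed

lemma mem_involution_image_iff:
  assumes "\<forall>x\<in>M. A x \<in> M \<and> A (A x) = x" "S \<subseteq> M" "x \<in> M"
  shows "x \<in> A ` S \<longleftrightarrow> A x \<in> S"
  using assms by (metis image_iff subsetD)

lemma closed_involution_pair_either_sign:
  fixes M :: "'a::metric_space set" and B :: "'i::group_add \<Rightarrow> 'a set"
  assumes "compact M" "continuous_on M A" and inv: "\<forall>x\<in>M. A x \<in> M \<and> A (A x) = x"
    and "closedin (top_of_set M) (B i)" "B (-i) = A ` B i" "B i \<inter> B (-i) = {}"
    and "j = i \<or> j = -i"
  shows "closed (B j) \<and> B j \<inter> B (-j) = {} \<and> (\<forall>x\<in>M. x \<in> B (-j) \<longleftrightarrow> A x \<in> B j)"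
proof -
  have "B i \<subseteq> M" "compact (B i)"
    using assms(1,4) closedin_compact closedin_imp_subset by blast+
  moreover have "compact (B (-i))"
    using calculation assms(2,5) by (metis compact_continuous_image continuous_on_subset)
  moreover have "x \<in> B (-i) \<longleftrightarrow> A x \<in> B i" "x \<in> B i \<longleftrightarrow> A x \<in> B (-i)" if "x \<in> M" for x
    using mem_involution_image_iff[OF inv \<open>B i \<subseteq> M\<close>] inv assms(5) that by force+
  ultimately show ?thesis
    using assms(6,7) by (auto simp: compact_imp_closed)
qed

lemma image_int_plus_one_atMost: "(\<lambda>n. int n + 1) ` {..d} = {1..int d + 1}"
proof
  show "{1..int d + 1} \<subseteq> (\<lambda>n. int n + 1) ` {..d}"
  proof
    fix i assume "i \<in> {1..int d + 1}"
    then have "i = int (nat (i - 1)) + 1" "nat (i - 1) \<in> {..d}"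
      by auto
    then show "i \<in> (\<lambda>n. int n + 1) ` {..d}"
      by blast
  qed
qed auto

lemma BU_property_signed_cover_intersection:
  fixes M :: "'a::metric_space set" and B :: "int \<Rightarrow> 'a set"
  assumes "compact M" "BU_property d M A" "continuous_on M A"
    and inv: "\<forall>x\<in>M. A x \<in> M \<and> A (A x) = x"
    and closed: "\<forall>i\<in>{1..int d + 1}. closedin (top_of_set M) (B i)"
    and image: "\<forall>i\<in>{1..int d + 1}. B (-i) = A ` B i"
    and disjoint: "\<forall>i\<in>{1..int d + 1}. B i \<inter> B (-i) = {}"
    and cover: "(\<Union>i\<in>{1..int d + 1}. B i \<union> B (-i)) = M"
    and k: "\<forall>i\<in>{1..int d + 1}. \<bar>k i\<bar> = i"
  shows "(\<Inter>i\<in>{1..int d + 1}. B (k i)) \<noteq> {}"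
proof -
  define C where "C n = B (k (int n + 1))" for n
  define D where "D n = B (- k (int n + 1))" for n
  have CD: "closed (C n) \<and> C n \<inter> D n = {} \<and> (\<forall>x\<in>M. x \<in> D n \<longleftrightarrow> A x \<in> C n)"
    and CD_cover: "C n \<union> D n = B (int n + 1) \<union> B (- (int n + 1))" if "n \<le> d" for n
  proof -
    have n: "int n + 1 \<in> {1..int d + 1}"
      using that by simp
    then have "\<bar>k (int n + 1)\<bar> = int n + 1"
      using k by blast
    then have k_signed: "k (int n + 1) = int n + 1 \<or> k (int n + 1) = - (int n + 1)"
      by arith
    show "closed (C n) \<and> C n \<inter> D n = {} \<and> (\<forall>x\<in>M. x \<in> D n \<longleftrightarrow> A x \<in> C n)"
      unfolding C_def D_def using n k_signed closed image disjoint
        closed_involution_pair_either_sign[OF assms(1,3) inv, of B "int n + 1" "k (int n + 1)"]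
      by blast
    show "C n \<union> D n = B (int n + 1) \<union> B (- (int n + 1))"
      unfolding C_def D_def using k_signed by (metis minus_minus sup_commute)
  qed
  have "\<exists>x\<in>M. \<forall>n\<le>d. x \<in> C n"
  proof (rule BU_property_closed_cover_common_point[OF assms(1,2)])
    show "\<forall>x\<in>M. A x \<in> M" "\<forall>n\<le>d. closed (C n)"
      using inv CD by blast+
    show "\<forall>n\<le>d. \<forall>x\<in>M. x \<in> C n \<longrightarrow> A x \<notin> C n"
      using CD inv by (metis disjoint_iff)
    have "M = (\<Union>n\<le>d. C n \<union> D n)"
      using cover CD_cover unfolding image_int_plus_one_atMost[symmetric] SUP_image by auto
    then show "\<forall>x\<in>M. \<exists>n\<le>d. x \<in> C n \<or> A x \<in> C n"
      using CD by blast
  qed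
  then show ?thesis
    unfolding C_def image_int_plus_one_atMost[symmetric] INF_image by auto
qed

theorem theorem4p1:
  fixes d :: nat and M :: "'a::euclidean_space set" and A :: "'a \<Rightarrow> 'a"
    and B :: "int \<Rightarrow> 'a set"
  assumes "BUT_manifold d M A"
    and "\<forall>i\<in>{1..int d + 1}. closedin (top_of_set M) (B i)"
    and "\<forall>i\<in>{1..int d + 1}. B (-i) = A ` B i"
    and "\<forall>i\<in>{1..int d + 1}. B i \<inter> B (-i) = {}"
    and "(\<Union>i\<in>{1..int d + 1}. B i \<union> B (-i)) = M"
  shows "\<forall>k :: int \<Rightarrow> int. (\<forall>i\<in>{1..int d + 1}. \<bar>k i\<bar> = i) \<longrightarrow>
           (\<Inter>i\<in>{1..int d + 1}. B (k i)) \<noteq> {}"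
proof (intro allI impI)
  fix k :: "int \<Rightarrow> int"
  assume k: "\<forall>i\<in>{1..int d + 1}. \<bar>k i\<bar> = i"
  obtain \<T> where "compact M" "triangulation \<T>" "\<Union>\<T> = M" "simplicial_self_map \<T> A"
    and "free_involution M A" "BU_property d M A"
    using assms(1) unfolding BUT_manifold_def by blast
  moreover from this have "continuous_on M A"
    using continuous_on_simplicial_self_map by blast
  moreover have "\<forall>x\<in>M. A x \<in> M \<and> A (A x) = x"
    using \<open>free_involution M A\<close> unfolding free_involution_def by blast
  ultimately show "(\<Inter>i\<in>{1..int d + 1}. B (k i)) \<noteq> {}"
    using BU_property_signed_cover_intersection[OF _ _ _ _ assms(2-5) k] by blast
qed

end
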